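(* Let $\lambda$ be a nonzero real number, $r$ a nonnegative integer, and $p(x)\in\mathbb{C}[x]$ of degree $n$. Then: (a) If $r>n$, \begin{align*} p(x)&=\sum_{k=0}^{n}\frac{1}{k!}\sum_{j=0}^{k}(-1)^{k-j}\binom{k}{j}\Big(I^{r-k}p\big(\lambda\mathbf{B}^{(r-k)}(\tfrac{x}{\lambda})\big)\Big)\Big|_{x=j}\,\beta^{(r)}_{k,\lambda}(x)\\ &=\sum_{k=0}^{n}\frac{1}{k!}\sum_{j=0}^{k}\sum_{l=0}^{n}(-1)^{k-j}\binom{k}{j}\frac{(r-k)!}{(l+r-k)!}S_2(l+r-k,r-k)\,p^{(l)}\big(\lambda\mathbf{B}^{(r-k)}(\tfrac{x}{\lambda})\big)\Big|_{x=j}\,\beta^{(r)}_{k,\lambda}(x). \end{align*} (b) If $r\le n$, \begin{align*} p(x)&=\sum_{k=0}^{r-1}\frac{1}{k!}\sum_{j=0}^{k}(-1)^{k-j}\binom{k}{j}\Big(I^{r-k}p\big(\lambda\mathbf{B}^{(r-k)}(\tfrac{x}{\lambda})\big)\Big)\Big|_{x=j}\,\beta^{(r)}_{k,\lambda}(x)\\ &\quad+\sum_{k=r}^{n}\frac{1}{k!\,\lambda^{k-r}}\sum_{j=0}^{r}\sum_{l=0}^{k-r}(-1)^{k-j-l}\binom{r}{j}\binom{k-r}{l}p(j+l\lambda)\,\beta^{(r)}_{k,\lambda}(x)\\ &=\sum_{k=0}^{r-1}\frac{1}{k!}\sum_{j=0}^{k}\sum_{l=0}^{n}(-1)^{k-j}\binom{k}{j}\frac{(r-k)!}{(l+r-k)!}S_2(l+r-k,r-k)\,p^{(l)}\big(\lambda\mathbf{B}^{(r-k)}(\tfrac{x}{\lambda})\big)\Big|_{x=j}\,\beta^{(r)}_{k,\lambda}(x)\\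 &\quad+\sum_{k=r}^{n}\frac{1}{k!}\sum_{j=0}^{r}\sum_{l=k-r}^{n}(-1)^{r-j}\binom{r}{j}(k-r)!\,\frac{\lambda^{l-k+r}}{l!}S_2(l,k-r)\,p^{(l)}(j)\,\beta^{(r)}_{k,\lambda}(x). \end{align*}
   Context: Higher-order degenerate Bernoulli polynomials $\beta^{(r)}_{n,\lambda}(x)$ are defined by $\Big(\frac{t}{(1+\lambda t)^{1/\lambda}-1}\Big)^r(1+\lambda t)^{x/\lambda}=\sum_{n\ge0}\beta^{(r)}_{n,\lambda}(x)\frac{t^n}{n!}$. Higher-order Bernoulli polynomials $B^{(a)}_n(x)$ are defined by $\big(\frac{t}{e^t-1}\big)^ae^{xt}=\sum_{n\ge0}B^{(a)}_n(x)\frac{t^n}{n!}$. For a polynomial $q(x)=\sum_i b_ix^i$, the umbral composition $q\big(\lambda\mathbf{B}^{(a)}(\frac{x}{\lambda})\big)$ denotes the polynomial $\sum_i b_i\lambda^iB^{(a)}_i(\frac{x}{\lambda})$ in $x$; in particular $p^{(l)}\big(\lambda\mathbf{B}^{(a)}(\frac{x}{\lambda})\big)$ is this composition applied to the $l$-th derivative $p^{(l)}$ of $p$. $I$ is the linear operator on polynomials $Iq(x)=\int_x^{x+1}q(u)\,du$, and $I^m$ its $m$-th iterate. $S_2(l,m)$ are Stirling numbers of the second kind, $\frac{1}{m!}(e^t-1)^m=\sum_{l\ge m}S_2(l,m)\frac{t^l}{l!}$. *)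

theory Defs
  imports "HOL-Analysis.Analysis" "HOL-Computational_Algebra.Computational_Algebra"
          "HOL-Combinatorics.Stirling"
begin

text \<open>The formal power series (1 + lam t)^(a/lam), i.e. sum over n of
  ((a/lam) gchoose n) * lam^n * t^n  (the binomial series).\<close>
definition deg_exp :: "complex \<Rightarrow> complex \<Rightarrow> complex fps" where
  "deg_exp lam a = Abs_fps (\<lambda>n. ((a / lam) gchoose n) * lam ^ n)"

definition degen_bernpoly :: "nat \<Rightarrow> complex \<Rightarrow> nat \<Rightarrow> complex \<Rightarrow> complex" where
  "degen_bernpoly r lam k x =
     fact k * fps_nth ((fps_X / (deg_exp lam 1 - 1)) ^ r * deg_exp lam x) k"

definition bernpoly_ho :: "nat \<Rightarrow> nat \<Rightarrow> complex \<Rightarrow> complex" where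
  "bernpoly_ho a n x = fact n * fps_nth ((fps_X / (fps_exp 1 - 1)) ^ a * fps_exp x) n"

text \<open>Umbral composition q(lam B^(a)(x/lam)) = sum_i b_i lam^i B^(a)_i(x/lam).\<close>
definition umbral :: "complex \<Rightarrow> nat \<Rightarrow> complex poly \<Rightarrow> complex \<Rightarrow> complex" where
  "umbral lam a q x = (\<Sum>i\<le>degree q. coeff q i * lam ^ i * bernpoly_ho a i (x / lam))"

definition Iop :: "(real \<Rightarrow> complex) \<Rightarrow> real \<Rightarrow> complex" where
  "Iop f = (\<lambda>x. integral {x..x+1} f)"

end

theory Submission
  imports Defs
begin

(* The degenerate Bernoulli polynomials form the Sheffer sequence of the pair (g^r, f) with
   f(t) = (e^(lam t) - 1)/lam, the compositional inverse of log(1 + lam t)/lam, and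
   g(t) = (e^t - 1)/f(t).  Writing <h | p> = (h(D) p)(0), every polynomial therefore expands as
   p = sum_k <g^r f^k | p> beta_k / k!.
   For k <= r we have g^r f^k = (e^t - 1)^k g^(r-k).  The factor (e^t - 1)^k is a k-th forward
   difference, and g^(r-k)(D) = ((e^D - 1)/D)^(r-k) (lam D/(e^(lam D) - 1))^(r-k) is I^(r-k) after
   umbral composition with lam B^(r-k)(x/lam).
   For k >= r we have g^r f^k = (e^t - 1)^r f^(k-r), and f^(k-r)(D) is a forward difference
   with step lam.
   The versions with derivatives come from expanding ((e^t - 1)/t)^m and (e^(lam t) - 1)^m in
   powers of t, whose coefficients are Stirling numbers of the second kind. *)

no_notation vec_nth (infixl "$" 90)

section \<open>Power series acting on polynomials as differential operators\<close>

definition fps_diffop :: "'a::idom fps \<Rightarrow> 'a poly \<Rightarrow> 'a poly" where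
  "fps_diffop h q = (\<Sum>i\<le>degree q. smult (h $ i) ((pderiv ^^ i) q))"

definition fps_pairing :: "'a::idom fps \<Rightarrow> 'a poly \<Rightarrow> 'a" where
  "fps_pairing h q = poly (fps_diffop h q) 0"

lemma higher_pderiv_eq_0: "degree q < i \<Longrightarrow> (pderiv ^^ i) q = 0"
  by (rule poly_eqI) (simp add: coeff_higher_pderiv coeff_eq_0)

lemma fps_diffop_eq_sum:
  assumes "degree q \<le> N"
  shows "fps_diffop h q = (\<Sum>i\<le>N. smult (h $ i) ((pderiv ^^ i) q))"
  unfolding fps_diffop_def
  by (rule sum.mono_neutral_left) (use assms in \<open>auto simp: higher_pderiv_eq_0\<close>)

lemma coeff_fps_diffop:
  assumes "degree q \<le> N"
  shows "coeff (fps_diffop h q) j = (\<Sum>i\<le>N. h $ i * pochhammer (of_nat (Suc j)) i * coeff q (j + i))"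
  by (simp add: fps_diffop_eq_sum[OF assms] coeff_sum coeff_higher_pderiv mult_ac)

lemma degree_fps_diffop_le: "degree (fps_diffop h q) \<le> degree q"
  by (rule degree_le) (auto simp: coeff_fps_diffop[OF order_refl] coeff_eq_0 intro!: sum.neutral)

lemma fps_diffop_mult: "fps_diffop h1 (fps_diffop h2 q) = fps_diffop (h1 * h2) q"
proof (rule poly_eqI)
  fix j
  define N where "N = degree q"
  define f where
    "f = (\<lambda>a b. h1 $ a * h2 $ b * pochhammer (of_nat (Suc j)) (a + b) * coeff q (j + a + b))"
  have dq: "degree q \<le> N" and d2: "degree (fps_diffop h2 q) \<le> N"
    using degree_fps_diffop_le[of h2 q] by (simp_all add: N_def)
  have "coeff (fps_diffop h1 (fps_diffop h2 q)) j = (\<Sum>a\<le>N. \<Sum>b\<le>N. f a b)"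
    by (simp add: coeff_fps_diffop[OF d2] coeff_fps_diffop[OF dq] f_def sum_distrib_left
          pochhammer_product' add_ac mult_ac)
  also have "\<dots> = (\<Sum>(a, b)\<in>{(a, b). a + b \<le> N}. f a b)"
    unfolding sum.cartesian_product
    by (rule sum.mono_neutral_right) (auto simp: f_def N_def dest!: le_degree)
  also have "\<dots> = (\<Sum>n\<le>N. \<Sum>a\<le>n. f a (n - a))"
    by (rule sum.triangle_reindex_eq)
  also have "\<dots> = coeff (fps_diffop (h1 * h2) q) j"
    by (auto simp: coeff_fps_diffop[OF dq] f_def fps_mult_nth sum_distrib_right atLeast0AtMost
             intro!: sum.cong)
  finally show "coeff (fps_diffop h1 (fps_diffop h2 q)) j = coeff (fps_diffop (h1 * h2) q) j" .
qed

lemma fps_diffop_1 [simp]: "fps_diffop 1 q = q"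
proof -
  have "fps_diffop 1 q = (\<Sum>i\<le>degree q. if i = 0 then q else 0)"
    unfolding fps_diffop_def by (intro sum.cong) auto
  then show ?thesis
    by simp
qed

lemma fps_diffop_X [simp]: "fps_diffop fps_X q = pderiv q"
proof (rule poly_eqI)
  fix j
  have "coeff (fps_diffop fps_X q) j =
      (\<Sum>i\<le>Suc (degree q). if i = 1 then of_nat (Suc j) * coeff q (Suc j) else 0)"
    unfolding coeff_fps_diffop[of q "Suc (degree q)", OF le_SucI[OF order_refl]]
    by (intro sum.cong) (auto simp: fps_X_nth)
  then show "coeff (fps_diffop fps_X q) j = coeff (pderiv q) j"
    by (simp add: coeff_pderiv)
qed

lemma fps_diffop_add_left: "fps_diffop (h1 + h2) q = fps_diffop h1 q + fps_diffop h2 q"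
  by (simp add: fps_diffop_def sum.distrib smult_add_left)

lemma fps_diffop_diff_left: "fps_diffop (h1 - h2) q = fps_diffop h1 q - fps_diffop h2 q"
  by (simp add: fps_diffop_def sum_subtractf smult_diff_left)

lemma fps_diffop_const_mult_left: "fps_diffop (fps_const c * h) q = smult c (fps_diffop h q)"
  by (rule poly_eqI) (simp add: coeff_fps_diffop[OF order_refl] sum_distrib_left mult_ac)

lemma fps_diffop_sum_left: "fps_diffop (\<Sum>x\<in>A. h x) q = (\<Sum>x\<in>A. fps_diffop (h x) q)"
  by (induction A rule: infinite_finite_induct)
     (simp_all add: fps_diffop_add_left fps_diffop_def[of 0])

lemma fps_diffop_add_right: "fps_diffop h (q1 + q2) = fps_diffop h q1 + fps_diffop h q2"
proof (rule poly_eqI)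
  fix j
  define N where "N = max (degree q1) (degree q2)"
  have "degree q1 \<le> N" "degree q2 \<le> N" "degree (q1 + q2) \<le> N"
    using degree_add_le_max[of q1 q2] by (auto simp: N_def)
  then show "coeff (fps_diffop h (q1 + q2)) j = coeff (fps_diffop h q1 + fps_diffop h q2) j"
    by (simp add: coeff_fps_diffop sum.distrib algebra_simps)
qed

lemma fps_diffop_smult_right: "fps_diffop h (smult c q) = smult c (fps_diffop h q)"
  by (rule poly_eqI) (simp add: coeff_fps_diffop[OF order_refl] sum_distrib_left mult_ac)

lemma fps_diffop_sum_right: "fps_diffop h (\<Sum>x\<in>A. q x) = (\<Sum>x\<in>A. fps_diffop h (q x))"
  by (induction A rule: infinite_finite_induct)
     (simp_all add: fps_diffop_add_right fps_diffop_def[of _ 0])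

lemma fps_pairing_eq_sum:
  assumes "degree q \<le> N"
  shows "fps_pairing h q = (\<Sum>i\<le>N. h $ i * fact i * coeff q i)"
  by (simp add: fps_pairing_def poly_0_coeff_0 coeff_fps_diffop[OF assms] pochhammer_fact)

lemma fps_pairing_exp: "fps_pairing (fps_exp (b::'a::field_char_0)) q = poly q b"
  by (simp add: fps_pairing_eq_sum[of q "degree q"] poly_altdef fps_exp_def mult_ac)

lemma poly_fps_diffop:
  fixes h :: "'a::field_char_0 fps"
  shows "poly (fps_diffop h q) y = fps_pairing (fps_exp y * h) q"
proof -
  have "poly (fps_diffop h q) y = fps_pairing (fps_exp y) (fps_diffop h q)"
    by (rule fps_pairing_exp[symmetric])
  also have "\<dots> = fps_pairing (fps_exp y * h) q"
    by (simp only: fps_pairing_def fps_diffop_mult)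
  finally show ?thesis .
qed

lemma poly_fps_diffop_exp: "poly (fps_diffop (fps_exp (a::'a::field_char_0)) q) y = poly q (y + a)"
  by (simp add: poly_fps_diffop fps_exp_add_mult[symmetric] fps_pairing_exp)

lemma fps_deriv_power_exp_minus_one:
  fixes c :: "'a::field_char_0"
  shows "fps_deriv ((fps_exp c - 1) ^ Suc m) =
    fps_const (of_nat (Suc m) * c) * ((fps_exp c - 1) ^ Suc m + (fps_exp c - 1) ^ m)"
proof -
  have e: "fps_exp c * (fps_exp c - 1) ^ m = (fps_exp c - 1) ^ Suc m + (fps_exp c - 1) ^ m"
    by (simp add: algebra_simps)
  have "fps_deriv ((fps_exp c - 1) ^ Suc m) =
      fps_const (of_nat (Suc m)) * (fps_const c * fps_exp c) * (fps_exp c - 1) ^ m"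
    by (simp only: fps_deriv_power diff_Suc_1 fps_deriv_sub fps_exp_deriv fps_deriv_1 diff_zero)
  also have "\<dots> = fps_const (of_nat (Suc m) * c) * (fps_exp c * (fps_exp c - 1) ^ m)"
    by (simp only: fps_const_mult[symmetric] mult.assoc)
  finally show ?thesis
    by (simp only: e)
qed

lemma fps_nth_power_exp_minus_one:
  fixes c :: "'a::field_char_0"
  shows "((fps_exp c - 1) ^ m) $ l = c ^ l * fact m * of_nat (Stirling l m) / fact l"
proof (induction l arbitrary: m)
  case 0
  then show ?case
    by (cases m) (simp_all add: fps_nth_power_0)
next
  case (Suc l)
  show ?case
  proof (cases m)
    case (Suc k)
    define a b d where "a = ((fps_exp c - 1) ^ Suc k) $ Suc l"
      and "b = ((fps_exp c - 1) ^ Suc k) $ l" and "d = ((fps_exp c - 1) ^ k) $ l"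
    have "fps_deriv ((fps_exp c - 1) ^ Suc k) $ l = of_nat (Suc k) * c * (b + d)"
      unfolding b_def d_def
      by (simp only: fps_deriv_power_exp_minus_one fps_mult_left_const_nth fps_add_nth)
    then have "of_nat (Suc l) * a = of_nat (Suc k) * c * (b + d)"
      unfolding a_def by (simp only: fps_deriv_nth Suc_eq_plus1)
    then have "a = of_nat (Suc k) * c * (b + d) / of_nat (Suc l)"
      by (simp add: field_simps del: of_nat_Suc)
    moreover have "b = c ^ l * fact (Suc k) * of_nat (Stirling l (Suc k)) / fact l"
      and "d = c ^ l * fact k * of_nat (Stirling l k) / fact l"
      unfolding b_def d_def by (rule Suc.IH)+
    ultimately have
      "a = c ^ Suc l * fact (Suc k) * of_nat (Stirling (Suc l) (Suc k)) / fact (Suc l)"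
      by (simp add: fact_Suc field_simps del: of_nat_Suc) (simp add: algebra_simps)
    then show ?thesis
      by (simp only: a_def Suc)
  qed simp
qed

lemma power_exp_minus_one_eq_sum:
  fixes c :: "'a::field_char_0"
  shows "(fps_exp c - 1) ^ m =
    (\<Sum>l=0..m. fps_const ((-1) ^ (m - l) * of_nat (m choose l)) * fps_exp (of_nat l * c))"
proof -
  have "(fps_exp c - 1) ^ m = (\<Sum>l\<le>m. of_nat (m choose l) * fps_exp c ^ l * (- 1) ^ (m - l))"
    using binomial_ring[of "fps_exp c" "-1" m] by simp
  then show ?thesis
    by (simp add: atLeast0AtMost fps_exp_power_mult fps_of_nat mult_ac
        flip: fps_const_mult fps_const_power fps_const_neg)
qed

lemma poly_fps_diffop_power_exp_minus_one:
  fixes c :: "'a::field_char_0"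
  shows "poly (fps_diffop ((fps_exp c - 1) ^ m) q) y =
    (\<Sum>l=0..m. (-1) ^ (m - l) * of_nat (m choose l) * poly q (y + of_nat l * c))"
  by (simp add: power_exp_minus_one_eq_sum fps_diffop_sum_left fps_diffop_const_mult_left
      poly_sum poly_fps_diffop_exp)

lemma fps_pairing_power_exp_minus_one_mult:
  fixes h :: "'a::field_char_0 fps"
  shows "fps_pairing ((fps_exp 1 - 1) ^ k * h) q =
    (\<Sum>j=0..k. (-1) ^ (k - j) * of_nat (k choose j) * poly (fps_diffop h q) (of_nat j))"
  by (simp add: fps_pairing_def poly_fps_diffop_power_exp_minus_one flip: fps_diffop_mult)

definition fps_expm1_over_X :: "'a::field_char_0 fps" where
  "fps_expm1_over_X = Abs_fps (\<lambda>n. 1 / fact (Suc n))"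

lemma fps_expm1_over_X_times_X: "fps_expm1_over_X * fps_X = fps_exp 1 - 1"
  by (rule fps_ext)
     (auto simp: fps_expm1_over_X_def fps_exp_def fps_X_mult_right_nth fact_reduce split: nat.split)

lemma fps_nth_power_expm1_over_X:
  "(fps_expm1_over_X ^ m :: 'a::field_char_0 fps) $ l =
    fact m * of_nat (Stirling (l + m) m) / fact (l + m)"
proof -
  have "(fps_exp 1 - 1) ^ m = fps_X ^ m * (fps_expm1_over_X ^ m :: 'a fps)"
    by (simp flip: fps_expm1_over_X_times_X add: power_mult_distrib mult_ac)
  then have "(fps_expm1_over_X ^ m :: 'a fps) $ l = ((fps_exp 1 - 1) ^ m) $ (l + m)"
    by (simp add: fps_X_power_mult_nth)
  then show ?thesis
    by (simp add: fps_nth_power_exp_minus_one)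
qed

lemma fps_X_divide_times_cancel:
  fixes g :: "'a::field fps"
  assumes "g $ 1 \<noteq> 0"
  shows "fps_X / g * g = fps_X"
proof (rule fps_times_divide_eq)
  show "g \<noteq> 0"
    using assms by auto
  show "subdegree g \<le> subdegree (fps_X :: 'a fps)"
    using assms by (auto intro: subdegree_leI)
qed

lemma fps_binomial_compose_exp_minus_one:
  fixes c :: "'a::field_char_0"
  shows "fps_binomial c oo (fps_exp 1 - 1) = fps_exp c"
proof -
  define F :: "'a fps" where "F = fps_exp 1 - 1"
  define B where "B = fps_binomial c"
  have F0: "F $ 0 = 0" and dF: "fps_deriv F = 1 + F"
    by (simp_all add: F_def)
  have "(1 + fps_X) * fps_deriv B = fps_const c * B"
    by (simp add: B_def fps_binomial_deriv fps_divide_unit mult.assoc[symmetric]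
        inverse_mult_eq_1 mult.commute[of "1 + fps_X"])
  then have "((1 + fps_X) * fps_deriv B) oo F = (fps_const c * B) oo F"
    by simp
  then have "fps_deriv (B oo F) = fps_const c * (B oo F)"
    by (simp add: fps_compose_mult_distrib[OF F0] fps_compose_add_distrib fps_compose_deriv[OF F0]
        F0 dF mult_ac)
  then have "B oo F = fps_const ((B oo F) $ 0) * fps_exp c"
    by (simp only: fps_exp_unique_ODE)
  then show ?thesis
    by (simp add: B_def F_def)
qed

section \<open>Expansion in a Sheffer sequence\<close>

lemma fps_nth_mult_compose:
  fixes G A F :: "'a::idom fps"
  assumes F0: "F $ 0 = 0" and "m \<le> N"
  shows "(G * (A oo F)) $ m = (\<Sum>k\<le>N. A $ k * (G * F ^ k) $ m)"
proof -
  have vanish: "(F ^ k) $ i = 0" if "i < k" for i k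
    using startsby_zero_power_prefix[OF F0] that by blast
  have "(G * (A oo F)) $ m = (\<Sum>i=0..m. G $ i * (\<Sum>k\<le>N. A $ k * (F ^ k) $ (m - i)))"
    unfolding fps_mult_nth fps_compose_nth atLeast0AtMost
    by (intro sum.cong refl arg_cong2[where f = "(*)"] sum.mono_neutral_left)
       (use assms vanish in auto)
  also have "\<dots> = (\<Sum>k\<le>N. A $ k * (G * F ^ k) $ m)"
    by (simp add: fps_mult_nth sum_distrib_left sum_distrib_right mult_ac sum.swap[of _ "{0..m}"])
  finally show ?thesis .
qed

text \<open>\<open>A\<close> is the generating function \<open>\<Sum>\<^sub>k s\<^sub>k(x) t\<^sup>k\<close> of a Sheffer sequence, at a fixed point \<open>x\<close>.\<close>
lemma poly_eq_sheffer_sum: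
  fixes G A F :: "'a::field_char_0 fps"
  assumes F0: "F $ 0 = 0" and GA: "G * (A oo F) = fps_exp x" and dp: "degree p \<le> n"
  shows "poly p x = (\<Sum>k\<le>n. A $ k * fps_pairing (G * F ^ k) p)"
proof -
  have "poly p x = fps_pairing (G * (A oo F)) p"
    by (simp add: GA fps_pairing_exp)
  also have "\<dots> = (\<Sum>m\<le>n. (G * (A oo F)) $ m * fact m * coeff p m)"
    by (rule fps_pairing_eq_sum[OF dp])
  also have "\<dots> = (\<Sum>m\<le>n. \<Sum>k\<le>n. A $ k * ((G * F ^ k) $ m * fact m * coeff p m))"
    by (simp add: fps_nth_mult_compose[OF F0] sum_distrib_right mult.assoc)
  also have "\<dots> = (\<Sum>k\<le>n. A $ k * (\<Sum>m\<le>n. (G * F ^ k) $ m * fact m * coeff p m))"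
    by (subst sum.swap) (simp add: sum_distrib_left)
  also have "\<dots> = (\<Sum>k\<le>n. A $ k * fps_pairing (G * F ^ k) p)"
    by (simp add: fps_pairing_eq_sum[OF dp])
  finally show ?thesis .
qed

section \<open>The Sheffer pair of the degenerate Bernoulli polynomials\<close>

lemma deg_exp_eq_compose_linear: "deg_exp L a = fps_binomial (a / L) oo (fps_const L * fps_X)"
  by (rule fps_ext) (simp add: deg_exp_def)

definition bernoulli_egf_scaled :: "complex \<Rightarrow> complex fps" where
  "bernoulli_egf_scaled L = (fps_X / (fps_exp 1 - 1)) oo (fps_const L * fps_X)"

definition degen_f :: "complex \<Rightarrow> complex fps" where
  "degen_f L = fps_const (1 / L) * (fps_exp L - 1)"

definition degen_g :: "complex \<Rightarrow> complex fps" where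
  "degen_g L = fps_expm1_over_X * bernoulli_egf_scaled L"

definition degen_bernoulli_egf :: "nat \<Rightarrow> complex \<Rightarrow> complex \<Rightarrow> complex fps" where
  "degen_bernoulli_egf r L x = (fps_X / (deg_exp L 1 - 1)) ^ r * deg_exp L x"

lemma degen_bernpoly_conv_egf: "degen_bernpoly r L k x = fact k * degen_bernoulli_egf r L x $ k"
  by (simp add: degen_bernpoly_def degen_bernoulli_egf_def)

lemma degen_f_nth_0 [simp]: "degen_f L $ 0 = 0"
  by (simp add: degen_f_def)

lemma degen_f_nonzero: "L \<noteq> 0 \<Longrightarrow> degen_f L \<noteq> 0"
  by (auto simp: degen_f_def fps_eq_iff fps_exp_def dest: spec[of _ 1])

lemma linear_compose_degen_f: "L \<noteq> 0 \<Longrightarrow> (fps_const L * fps_X) oo degen_f L = fps_exp L - 1"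
  by (simp add: fps_compose_mult_distrib degen_f_def flip: mult.assoc fps_const_mult)

lemma deg_exp_compose_degen_f:
  assumes "L \<noteq> 0"
  shows "deg_exp L a oo degen_f L = fps_exp a"
proof -
  define LX :: "complex fps" where "LX = fps_const L * fps_X"
  have LX0: "LX $ 0 = 0"
    by (simp add: LX_def)
  have "deg_exp L a oo degen_f L = fps_binomial (a / L) oo (LX oo degen_f L)"
    by (simp add: deg_exp_eq_compose_linear fps_compose_assoc LX_def)
  also have "LX oo degen_f L = (fps_exp 1 - 1) oo LX"
    using assms by (simp add: LX_def linear_compose_degen_f fps_compose_sub_distrib)
  also have "fps_binomial (a / L) oo ((fps_exp 1 - 1) oo LX) =
      (fps_binomial (a / L) oo (fps_exp 1 - 1)) oo LX"
    by (rule fps_compose_assoc) (simp_all add: LX0)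
  also have "\<dots> = fps_exp a"
    using assms by (simp add: fps_binomial_compose_exp_minus_one LX_def)
  finally show ?thesis .
qed

lemma degen_g_times_degen_f:
  assumes "L \<noteq> 0"
  shows "degen_g L * degen_f L = fps_exp 1 - 1"
proof -
  have "(fps_X / (fps_exp 1 - 1)) * (fps_exp 1 - 1) = (fps_X :: complex fps)"
    by (rule fps_X_divide_times_cancel) (simp add: fps_exp_def)
  from arg_cong[OF this, of "\<lambda>h. h oo (fps_const L * fps_X)"]
  have Bl: "bernoulli_egf_scaled L * (fps_exp L - 1) = fps_const L * fps_X"
    by (simp add: bernoulli_egf_scaled_def fps_compose_mult_distrib fps_compose_sub_distrib)
  have "degen_g L * degen_f L =
      fps_const (1 / L) * fps_expm1_over_X * (bernoulli_egf_scaled L * (fps_exp L - 1))"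
    by (simp add: degen_g_def degen_f_def mult_ac)
  also have "\<dots> = fps_const (1 / L * L) * (fps_expm1_over_X * fps_X)"
    by (simp only: Bl mult_ac flip: fps_const_mult)
  also have "\<dots> = fps_exp 1 - 1"
    using assms by (simp add: fps_expm1_over_X_times_X)
  finally show ?thesis .
qed

lemma degen_g_power_mult_egf_compose:
  assumes "L \<noteq> 0"
  shows "degen_g L ^ r * (degen_bernoulli_egf r L x oo degen_f L) = fps_exp x"
proof -
  define B where "B = fps_X / (deg_exp L 1 - 1)"
  have "B * (deg_exp L 1 - 1) = fps_X"
    unfolding B_def by (rule fps_X_divide_times_cancel) (use assms in \<open>simp add: deg_exp_def\<close>)
  from arg_cong[OF this, of "\<lambda>h. h oo degen_f L"]
  have "(B oo degen_f L) * (fps_exp 1 - 1) = degen_f L"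
    by (simp add: fps_compose_mult_distrib fps_compose_sub_distrib
        deg_exp_compose_degen_f[OF assms])
  then have "((B oo degen_f L) * degen_g L) * degen_f L = 1 * degen_f L"
    by (simp only: mult.assoc degen_g_times_degen_f[OF assms] mult_1_left)
  then have inverse: "(B oo degen_f L) * degen_g L = 1"
    using degen_f_nonzero[OF assms] by (simp only: mult_cancel_right) simp
  have "degen_bernoulli_egf r L x oo degen_f L = (B oo degen_f L) ^ r * fps_exp x"
    unfolding degen_bernoulli_egf_def B_def[symmetric]
    by (simp only: fps_compose_mult_distrib[OF degen_f_nth_0] fps_compose_power[OF degen_f_nth_0]
        deg_exp_compose_degen_f[OF assms])
  then have "degen_g L ^ r * (degen_bernoulli_egf r L x oo degen_f L) =
      ((B oo degen_f L) * degen_g L) ^ r * fps_exp x"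
    by (simp only: power_mult_distrib mult_ac)
  then show ?thesis
    by (simp only: inverse power_one mult_1_left)
qed

lemma poly_eq_degen_bernpoly_sum:
  assumes "L \<noteq> 0" and "degree p \<le> n"
  shows "poly p x =
    (\<Sum>k\<le>n. 1 / fact k * fps_pairing (degen_g L ^ r * degen_f L ^ k) p * degen_bernpoly r L k x)"
proof -
  have "poly p x =
      (\<Sum>k\<le>n. degen_bernoulli_egf r L x $ k * fps_pairing (degen_g L ^ r * degen_f L ^ k) p)"
    using degen_g_power_mult_egf_compose[OF assms(1)] assms(2)
    by (rule poly_eq_sheffer_sum[OF degen_f_nth_0])
  then show ?thesis
    by (simp add: degen_bernpoly_conv_egf ac_simps)
qed

section \<open>The coefficients of the expansion\<close>

lemma exists_pderiv_eq: "\<exists>Q. pderiv Q = (U :: 'a::field_char_0 poly)"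
proof
  let ?Q = "\<Sum>i\<le>degree U. monom (coeff U i / of_nat (Suc i)) (Suc i)"
  show "pderiv ?Q = U"
  proof (rule poly_eqI)
    fix n
    have "coeff ?Q (Suc n) = (if n \<le> degree U then coeff U n / of_nat (Suc n) else 0)"
      by (simp add: coeff_sum coeff_monom)
    then show "coeff (pderiv ?Q) n = coeff U n"
      by (auto simp: coeff_pderiv coeff_eq_0 simp del: of_nat_Suc)
  qed
qed

text \<open>With \<open>Q' = U\<close>, \<open>I U (x) = Q(x + 1) - Q(x) = ((e\<^sup>D - 1) Q)(x)\<close>, so \<open>I\<close> acts as \<open>(e\<^sup>D - 1)/D\<close>.\<close>
lemma Iop_poly:
  "Iop (\<lambda>t. poly U (of_real t)) = (\<lambda>t. poly (fps_diffop fps_expm1_over_X U) (of_real t))"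
proof
  fix x :: real
  obtain Q where Q: "pderiv Q = U"
    using exists_pderiv_eq by blast
  have "((\<lambda>t. poly U (of_real t)) has_integral
      (poly Q (of_real (x + 1)) - poly Q (of_real x))) {x..x + 1}"
  proof (rule fundamental_theorem_of_calculus)
    fix t :: real
    have "(poly Q has_field_derivative poly U (of_real t)) (at (of_real t))"
      using poly_DERIV[of Q "of_real t"] by (simp add: Q)
    then show "((\<lambda>t. poly Q (of_real t)) has_vector_derivative poly U (of_real t))
        (at t within {x..x + 1})"
      by (rule has_vector_derivative_real_field)
  qed simp
  then have "Iop (\<lambda>t. poly U (of_real t)) x = poly (fps_diffop (fps_exp 1 - 1) Q) (of_real x)"
    by (simp add: Iop_def integral_unique fps_diffop_diff_left poly_fps_diffop_exp)
  also have "\<dots> = poly (fps_diffop fps_expm1_over_X U) (of_real x)"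
    by (simp flip: Q fps_expm1_over_X_times_X fps_diffop_mult)
  finally show "Iop (\<lambda>t. poly U (of_real t)) x = poly (fps_diffop fps_expm1_over_X U) (of_real x)" .
qed

lemma funpow_Iop_poly:
  "(Iop ^^ m) (\<lambda>t. poly U (of_real t)) =
    (\<lambda>t. poly (fps_diffop (fps_expm1_over_X ^ m) U) (of_real t))"
  by (induction m) (simp_all add: Iop_poly fps_diffop_mult)

lemma umbral_eq_poly_fps_diffop:
  assumes "L \<noteq> 0"
  shows "umbral L m q y = poly (fps_diffop (bernoulli_egf_scaled L ^ m) q) y"
proof -
  have LX0: "(fps_const L * fps_X) $ 0 = 0"
    by simp
  have "fps_exp y = fps_exp (y / L) oo (fps_const L * fps_X)"
    using assms by simp
  then have "fps_exp y * bernoulli_egf_scaled L ^ m =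
      (fps_exp (y / L) * (fps_X / (fps_exp 1 - 1)) ^ m) oo (fps_const L * fps_X)"
    unfolding bernoulli_egf_scaled_def
    by (simp only: fps_compose_power[OF LX0] fps_compose_mult_distrib[OF LX0])
  then have "poly (fps_diffop (bernoulli_egf_scaled L ^ m) q) y = (\<Sum>i\<le>degree q.
      L ^ i * (fps_exp (y / L) * (fps_X / (fps_exp 1 - 1)) ^ m) $ i * fact i * coeff q i)"
    by (simp add: poly_fps_diffop fps_pairing_eq_sum[OF order_refl])
  then show ?thesis
    by (simp add: umbral_def bernpoly_ho_def mult_ac)
qed

lemma funpow_Iop_umbral:
  assumes "L \<noteq> 0"
  shows "(Iop ^^ m) (\<lambda>t. umbral L m q (of_real t)) =
    (\<lambda>t. poly (fps_diffop (degen_g L ^ m) q) (of_real t))"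
  by (simp add: umbral_eq_poly_fps_diffop[OF assms] funpow_Iop_poly fps_diffop_mult degen_g_def
      power_mult_distrib)

lemma degen_g_power_mult_f_power_le:
  assumes "L \<noteq> 0" and "k \<le> r"
  shows "degen_g L ^ r * degen_f L ^ k = (fps_exp 1 - 1) ^ k * degen_g L ^ (r - k)"
proof -
  have "degen_g L ^ r * degen_f L ^ k = (degen_g L * degen_f L) ^ k * degen_g L ^ (r - k)"
    using assms(2) by (simp add: power_mult_distrib mult_ac flip: power_add)
  then show ?thesis
    by (simp add: degen_g_times_degen_f[OF assms(1)])
qed

lemma degen_g_power_mult_f_power_ge:
  assumes "L \<noteq> 0" and "r \<le> k"
  shows "degen_g L ^ r * degen_f L ^ k = (fps_exp 1 - 1) ^ r * degen_f L ^ (k - r)"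
proof -
  have "degen_g L ^ r * degen_f L ^ k = (degen_g L * degen_f L) ^ r * degen_f L ^ (k - r)"
    using assms(2) by (simp add: power_mult_distrib mult_ac flip: power_add)
  then show ?thesis
    by (simp add: degen_g_times_degen_f[OF assms(1)])
qed

lemma fps_nth_power_degen_f:
  assumes "L \<noteq> 0"
  shows "(degen_f L ^ m) $ l = fact m * (L ^ (l - m) / fact l) * of_nat (Stirling l m)"
proof -
  have "degen_f L ^ m = fps_const ((1 / L) ^ m) * (fps_exp L - 1) ^ m"
    by (simp add: degen_f_def power_mult_distrib)
  then have nth:
    "(degen_f L ^ m) $ l = (1 / L) ^ m * (L ^ l * fact m * of_nat (Stirling l m) / fact l)"
    by (simp add: fps_nth_power_exp_minus_one)
  show ?thesis
  proof (cases "m \<le> l")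
    case True
    then have "L ^ l = L ^ m * L ^ (l - m)"
      by (simp flip: power_add)
    then show ?thesis
      using assms by (simp add: nth field_simps)
  qed (simp add: nth)
qed

lemma poly_fps_diffop_degen_g_power:
  assumes "L \<noteq> 0" and "degree p \<le> n"
  shows "poly (fps_diffop (degen_g L ^ m) p) y =
    (\<Sum>l=0..n. fact m / fact (l + m) * of_nat (Stirling (l + m) m) * umbral L m ((pderiv ^^ l) p) y)"
proof -
  have "fps_diffop (degen_g L ^ m) p =
      fps_diffop (bernoulli_egf_scaled L ^ m) (fps_diffop (fps_expm1_over_X ^ m) p)"
    by (simp add: fps_diffop_mult degen_g_def power_mult_distrib mult.commute)
  also have "\<dots> = (\<Sum>l\<le>n. smult ((fps_expm1_over_X ^ m) $ l)
      (fps_diffop (bernoulli_egf_scaled L ^ m) ((pderiv ^^ l) p)))"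
    by (simp add: fps_diffop_eq_sum[OF assms(2)] fps_diffop_sum_right fps_diffop_smult_right)
  finally show ?thesis
    by (simp add: poly_sum umbral_eq_poly_fps_diffop[OF assms(1)] fps_nth_power_expm1_over_X
        atLeast0AtMost mult_ac)
qed

lemma poly_fps_diffop_degen_f_power:
  assumes "L \<noteq> 0" and "degree p \<le> n"
  shows "poly (fps_diffop (degen_f L ^ m) p) y =
    (\<Sum>l=m..n. fact m * (L ^ (l - m) / fact l) * of_nat (Stirling l m) * poly ((pderiv ^^ l) p) y)"
proof -
  have "poly (fps_diffop (degen_f L ^ m) p) y =
      (\<Sum>l\<le>n. (degen_f L ^ m) $ l * poly ((pderiv ^^ l) p) y)"
    by (simp add: fps_diffop_eq_sum[OF assms(2)] poly_sum)
  also have "\<dots> = (\<Sum>l=m..n. (degen_f L ^ m) $ l * poly ((pderiv ^^ l) p) y)"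
    by (rule sum.mono_neutral_right) (auto simp: fps_nth_power_degen_f[OF assms(1)])
  finally show ?thesis
    by (simp add: fps_nth_power_degen_f[OF assms(1)])
qed

lemma fps_pairing_degen_eq_Iop_umbral:
  assumes "L \<noteq> 0" and "k \<le> r"
  shows "fps_pairing (degen_g L ^ r * degen_f L ^ k) p =
    (\<Sum>j=0..k. (-1) ^ (k - j) * of_nat (k choose j) *
       (Iop ^^ (r - k)) (\<lambda>t. umbral L (r - k) p (of_real t)) (real j))"
  by (simp add: degen_g_power_mult_f_power_le[OF assms] fps_pairing_power_exp_minus_one_mult
      funpow_Iop_umbral[OF assms(1)])

lemma fps_pairing_degen_eq_umbral_pderiv:
  assumes "L \<noteq> 0" and "k \<le> r" and "degree p \<le> n"
  shows "fps_pairing (degen_g L ^ r * degen_f L ^ k) p =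
    (\<Sum>j=0..k. \<Sum>l=0..n. (-1) ^ (k - j) * of_nat (k choose j) *
       (fact (r - k) / fact (l + r - k)) * of_nat (Stirling (l + r - k) (r - k)) *
       umbral L (r - k) ((pderiv ^^ l) p) (of_nat j))"
  unfolding degen_g_power_mult_f_power_le[OF assms(1,2)] fps_pairing_power_exp_minus_one_mult
  using assms(2)
  by (simp add: poly_fps_diffop_degen_g_power[OF assms(1,3)] sum_distrib_left mult_ac)

lemma fps_pairing_degen_eq_shift_sum:
  assumes "L \<noteq> 0" and "r \<le> k"
  shows "fps_pairing (degen_g L ^ r * degen_f L ^ k) p = 1 / L ^ (k - r) *
    (\<Sum>j=0..r. \<Sum>l=0..k - r. (-1) ^ (k - j - l) * of_nat (r choose j) *
       of_nat ((k - r) choose l) * poly p (of_nat j + of_nat l * L))"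
proof -
  have f_power: "degen_f L ^ (k - r) = fps_const (1 / L ^ (k - r)) * (fps_exp L - 1) ^ (k - r)"
    by (simp add: degen_f_def power_mult_distrib power_one_over)
  have "fps_pairing (degen_g L ^ r * degen_f L ^ k) p =
    (\<Sum>j=0..r. \<Sum>l=0..k - r. 1 / L ^ (k - r) * ((-1) ^ (r - j) * (-1) ^ (k - r - l) *
       of_nat (r choose j) * of_nat ((k - r) choose l) * poly p (of_nat j + of_nat l * L)))"
    unfolding degen_g_power_mult_f_power_ge[OF assms] fps_pairing_power_exp_minus_one_mult f_power
      fps_diffop_const_mult_left
    by (simp add: poly_fps_diffop_power_exp_minus_one sum_distrib_left mult_ac)
  also have "\<dots> = 1 / L ^ (k - r) *
    (\<Sum>j=0..r. \<Sum>l=0..k - r. (-1) ^ (k - j - l) * of_nat (r choose j) *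
       of_nat ((k - r) choose l) * poly p (of_nat j + of_nat l * L))"
    unfolding sum_distrib_left
  proof (intro sum.cong refl)
    fix j l
    assume "j \<in> {0..r}" and "l \<in> {0..k - r}"
    then have "(-1::complex) ^ (k - j - l) = (-1) ^ (r - j) * (-1) ^ (k - r - l)"
      using assms(2) by (simp flip: power_add)
    then show "1 / L ^ (k - r) * ((-1) ^ (r - j) * (-1) ^ (k - r - l) * of_nat (r choose j) *
        of_nat ((k - r) choose l) * poly p (of_nat j + of_nat l * L)) =
      1 / L ^ (k - r) * ((-1) ^ (k - j - l) * of_nat (r choose j) *
        of_nat ((k - r) choose l) * poly p (of_nat j + of_nat l * L))"
      by (simp only:)
  qed
  finally show ?thesis .
qed

lemma fps_pairing_degen_eq_pderiv_sum:
  assumes "L \<noteq> 0" and "r \<le> k" and "degree p \<le> n"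
  shows "fps_pairing (degen_g L ^ r * degen_f L ^ k) p =
    (\<Sum>j=0..r. \<Sum>l=k - r..n. (-1) ^ (r - j) * of_nat (r choose j) *
       fact (k - r) * (L ^ (l - (k - r)) / fact l) * of_nat (Stirling l (k - r)) *
       poly ((pderiv ^^ l) p) (of_nat j))"
  unfolding degen_g_power_mult_f_power_ge[OF assms(1,2)] fps_pairing_power_exp_minus_one_mult
  by (simp add: poly_fps_diffop_degen_f_power[OF assms(1,3)] sum_distrib_left mult_ac)

theorem theorem4p2:
  fixes lam :: real and r n :: nat and p :: "complex poly"
  assumes "lam \<noteq> 0" and "degree p = n"
  defines "L \<equiv> complex_of_real lam"
  shows
  "(n < r \<longrightarrow>
     (\<forall>x. poly p x =
        (\<Sum>k=0..n. 1 / fact k *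
           (\<Sum>j=0..k. (-1) ^ (k - j) * of_nat (k choose j) *
              (Iop ^^ (r - k)) (\<lambda>t. umbral L (r - k) p (of_real t)) (real j))
           * degen_bernpoly r L k x)) \<and>
     (\<forall>x. poly p x =
        (\<Sum>k=0..n. 1 / fact k *
           (\<Sum>j=0..k. \<Sum>l=0..n. (-1) ^ (k - j) * of_nat (k choose j) *
              (fact (r - k) / fact (l + r - k)) * of_nat (Stirling (l + r - k) (r - k)) *
              umbral L (r - k) ((pderiv ^^ l) p) (of_nat j))
           * degen_bernpoly r L k x))) \<and>
   (r \<le> n \<longrightarrow>
     (\<forall>x. poly p x =
        (\<Sum>k<r. 1 / fact k *
           (\<Sum>j=0..k. (-1) ^ (k - j) * of_nat (k choose j) *
              (Iop ^^ (r - k)) (\<lambda>t. umbral L (r - k) p (of_real t)) (real j))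
           * degen_bernpoly r L k x)
      + (\<Sum>k=r..n. 1 / (fact k * L ^ (k - r)) *
           (\<Sum>j=0..r. \<Sum>l=0..k - r. (-1) ^ (k - j - l) * of_nat (r choose j) *
              of_nat ((k - r) choose l) * poly p (of_nat j + of_nat l * L))
           * degen_bernpoly r L k x)) \<and>
     (\<forall>x. poly p x =
        (\<Sum>k<r. 1 / fact k *
           (\<Sum>j=0..k. \<Sum>l=0..n. (-1) ^ (k - j) * of_nat (k choose j) *
              (fact (r - k) / fact (l + r - k)) * of_nat (Stirling (l + r - k) (r - k)) *
              umbral L (r - k) ((pderiv ^^ l) p) (of_nat j))
           * degen_bernpoly r L k x)
      + (\<Sum>k=r..n. 1 / fact k *
           (\<Sum>j=0..r. \<Sum>l=k - r..n. (-1) ^ (r - j) * of_nat (r choose j) *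
              fact (k - r) * (L ^ (l - (k - r)) / fact l) * of_nat (Stirling l (k - r)) *
              poly ((pderiv ^^ l) p) (of_nat j))
           * degen_bernpoly r L k x)))"
proof -
  have L: "L \<noteq> 0" and dp: "degree p \<le> n"
    using assms by (simp_all add: L_def)
  note expansion = poly_eq_degen_bernpoly_sum[OF L dp, of _ r]
  have split: "(\<Sum>k\<le>n. f k) = (\<Sum>k<r. f k) + (\<Sum>k=r..n. f k)" if "r \<le> n" for f :: "nat \<Rightarrow> complex"
    using that by (simp add: atLeast0LessThan[symmetric] atLeastLessThanSuc_atLeastAtMost[symmetric]
        atLeast0AtMost[symmetric] sum.atLeastLessThan_concat)
  show ?thesis
    apply (intro conjI impI allI)
    subgoal for x
      unfolding expansion[of x] atMost_atLeast0
      by (intro sum.cong refl) (simp add: fps_pairing_degen_eq_Iop_umbral[OF L])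
    subgoal for x
      unfolding expansion[of x] atMost_atLeast0
      by (intro sum.cong refl) (simp add: fps_pairing_degen_eq_umbral_pderiv[OF L _ dp])
    subgoal premises rn for x
      unfolding expansion[of x] split[OF rn]
      by (intro arg_cong2[where f = "(+)"] sum.cong refl)
         (simp_all add: fps_pairing_degen_eq_Iop_umbral[OF L] fps_pairing_degen_eq_shift_sum[OF L])
    subgoal premises rn for x
      unfolding expansion[of x] split[OF rn]
      by (intro arg_cong2[where f = "(+)"] sum.cong refl)
         (simp_all add: fps_pairing_degen_eq_umbral_pderiv[OF L _ dp]
           fps_pairing_degen_eq_pderiv_sum[OF L _ dp])
    done
qed

end
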